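(* Let $m>a\geq 0$, $n>b\geq0$, $h\geq 0$ be integers with $h\leq (m-a)(n-b)-\max\{m-a,n-b\}$. Then $$\mathbb{E}^{\max}_{m\times n}(a,b,h)=\{\mathcal{E}'\cup\mathcal{I}\ \mid\ \mathcal{E}'\in\mathbb{E}^{\max}_{m\times n}(a,b,0),\ \mathcal{I}\subset([m]\times[n])\setminus\mathcal{E}',\ |\mathcal{I}|=h\},$$ i.e., every maximal correctable erasure pattern of $T_{m\times n}(a,b,h)$ is obtained by adding $h$ erasures to some maximal correctable pattern of $T_{m\times n}(a,b,0)$, and every such set is a maximal correctable pattern of $T_{m\times n}(a,b,h)$.
   Context: Positions of vectors in $\mathbb{F}^{mn}$ are identified with the grid $[m]\times[n]$, where $[k]=\{1,\dots,k\}$. For linear codes $\mathcal{C}_1\subseteq\mathbb{F}^m$, $\mathcal{C}_2\subseteq\mathbb{F}^n$ with generator matrices $\mathbf{G}_1,\mathbf{G}_2$, $\mathcal{C}_1\otimes\mathcal{C}_2$ is the row span of the Kronecker product $\mathbf{G}_1\otimes\mathbf{G}_2$. A code for the topology $T_{m\times n}(a,b,h)$ is a linear code over a finite field $\mathbb{F}$ with a parity-check matrix $\begin{pmatrix}\mathbf{H}_{\mathsf{local}}\\ \mathbf{H}_{\mathsf{global}}\end{pmatrix}$, where $\mathbf{H}_{\mathsf{local}}$ is a parity-check matrix of $\mathcal{C}_{\mathsf{col}}\otimes\mathcal{C}_{\mathsf{row}}$ for some linear $[m,\geq m-a]$ code $\mathcal{C}_{\mathsf{col}}$ and $[n,\geq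 n-b]$ code $\mathcal{C}_{\mathsf{row}}$ over $\mathbb{F}$, and $\mathbf{H}_{\mathsf{global}}$ is an arbitrary $h\times mn$ matrix over $\mathbb{F}$; $\mathbb{C}_{m\times n}(a,b,h)$ is the set of all such codes (over any finite field). A code corrects an erasure pattern $\mathcal{E}\subseteq[m]\times[n]$ if no two distinct codewords agree on all positions outside $\mathcal{E}$. $\mathcal{E}$ is correctable in $T_{m\times n}(a,b,h)$ if some code in $\mathbb{C}_{m\times n}(a,b,h)$ corrects it; $\mathbb{E}_{m\times n}(a,b,h)$ is the set of such patterns and $\mathbb{E}^{\max}_{m\times n}(a,b,h)$ the set of correctable patterns not properly contained in another correctable pattern. *)

theory Defs
  imports "HOL-Algebra.Ring"
begin

text \<open>Finite fields are represented as HOL-Algebra fields whose carrier is a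
finite set of natural numbers (every finite field is isomorphic to such a one).\<close>

definition vecs :: "nat ring \<Rightarrow> 'i set \<Rightarrow> ('i \<Rightarrow> nat) set" where
  "vecs R I = {v. (\<forall>i\<in>I. v i \<in> carrier R) \<and> (\<forall>i. i \<notin> I \<longrightarrow> v i = \<zero>\<^bsub>R\<^esub>)}"

definition lin_comb :: "nat ring \<Rightarrow> nat list \<Rightarrow> ('i \<Rightarrow> nat) list \<Rightarrow> 'i \<Rightarrow> nat" where
  "lin_comb R cs vs = (\<lambda>p. \<Oplus>\<^bsub>R\<^esub>k\<in>{..<length vs}. cs ! k \<otimes>\<^bsub>R\<^esub> (vs ! k) p)"

definition is_subspace :: "nat ring \<Rightarrow> 'i set \<Rightarrow> ('i \<Rightarrow> nat) set \<Rightarrow> bool" where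
  "is_subspace R I C \<longleftrightarrow> C \<subseteq> vecs R I \<and> (\<lambda>_. \<zero>\<^bsub>R\<^esub>) \<in> C
     \<and> (\<forall>u\<in>C. \<forall>v\<in>C. (\<lambda>i. u i \<oplus>\<^bsub>R\<^esub> v i) \<in> C)
     \<and> (\<forall>c\<in>carrier R. \<forall>v\<in>C. (\<lambda>i. c \<otimes>\<^bsub>R\<^esub> v i) \<in> C)"

definition lin_indep :: "nat ring \<Rightarrow> ('i \<Rightarrow> nat) list \<Rightarrow> bool" where
  "lin_indep R vs \<longleftrightarrow> (\<forall>cs. length cs = length vs \<and> set cs \<subseteq> carrier R
      \<and> lin_comb R cs vs = (\<lambda>_. \<zero>\<^bsub>R\<^esub>) \<longrightarrow> (\<forall>k<length vs. cs ! k = \<zero>\<^bsub>R\<^esub>))"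

definition dim_ge :: "nat ring \<Rightarrow> ('i \<Rightarrow> nat) set \<Rightarrow> nat \<Rightarrow> bool" where
  "dim_ge R C k \<longleftrightarrow> (\<exists>vs. length vs = k \<and> set vs \<subseteq> C \<and> lin_indep R vs)"

definition lin_code :: "nat ring \<Rightarrow> 'i set \<Rightarrow> nat \<Rightarrow> ('i \<Rightarrow> nat) set \<Rightarrow> bool" where
  "lin_code R I k C \<longleftrightarrow> is_subspace R I C \<and> dim_ge R C k"

definition span_of :: "nat ring \<Rightarrow> ('i \<Rightarrow> nat) set \<Rightarrow> ('i \<Rightarrow> nat) set" where
  "span_of R S = {lin_comb R cs vs | cs vs. set vs \<subseteq> S \<and> length cs = length vs \<and> set cs \<subseteq> carrier R}"

text \<open>tensor product code: span of all u \<otimes> v with (u \<otimes> v)(i,j) = u_i v_j,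
  which equals the row span of the Kronecker product of generator matrices\<close>
definition tensor_code :: "nat ring \<Rightarrow> (nat \<Rightarrow> nat) set \<Rightarrow> (nat \<Rightarrow> nat) set \<Rightarrow> (nat \<times> nat \<Rightarrow> nat) set" where
  "tensor_code R C1 C2 = span_of R {(\<lambda>(i,j). u i \<otimes>\<^bsub>R\<^esub> v j) | u v. u \<in> C1 \<and> v \<in> C2}"

definition grid :: "nat \<Rightarrow> nat \<Rightarrow> (nat \<times> nat) set" where
  "grid m n = {1..m} \<times> {1..n}"

text \<open>C is a code for topology T_{m\<times>n}(a,b,h) over R: the kernel of
  (H_local; H_global), i.e. (C_col \<otimes> C_row) \<inter> ker H_global, where the h rows of
  H_global are given by g 0, ..., g (h-1).\<close>
definition topo_code :: "nat ring \<Rightarrow> nat \<Rightarrow> nat \<Rightarrow> nat \<Rightarrow> nat \<Rightarrow> nat \<Rightarrow> (nat \<times> nat \<Rightarrow> nat) set \<Rightarrow> bool" where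
  "topo_code R m n a b h C \<longleftrightarrow>
     (\<exists>Ccol Crow g. lin_code R {1..m} (m - a) Ccol \<and> lin_code R {1..n} (n - b) Crow
        \<and> (\<forall>k<h. \<forall>p\<in>grid m n. g k p \<in> carrier R)
        \<and> C = {x \<in> tensor_code R Ccol Crow.
                 \<forall>k<h. (\<Oplus>\<^bsub>R\<^esub>p\<in>grid m n. g k p \<otimes>\<^bsub>R\<^esub> x p) = \<zero>\<^bsub>R\<^esub>})"

definition corrects :: "(nat \<times> nat \<Rightarrow> nat) set \<Rightarrow> nat \<Rightarrow> nat \<Rightarrow> (nat \<times> nat) set \<Rightarrow> bool" where
  "corrects C m n E \<longleftrightarrow> (\<forall>x\<in>C. \<forall>y\<in>C. (\<forall>p\<in>grid m n - E. x p = y p) \<longrightarrow> x = y)"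

definition correctable :: "nat \<Rightarrow> nat \<Rightarrow> nat \<Rightarrow> nat \<Rightarrow> nat \<Rightarrow> (nat \<times> nat) set \<Rightarrow> bool" where
  "correctable m n a b h E \<longleftrightarrow> E \<subseteq> grid m n \<and>
     (\<exists>R::nat ring. field R \<and> finite (carrier R) \<and>
        (\<exists>C. topo_code R m n a b h C \<and> corrects C m n E))"

definition max_correctable :: "nat \<Rightarrow> nat \<Rightarrow> nat \<Rightarrow> nat \<Rightarrow> nat \<Rightarrow> (nat \<times> nat) set \<Rightarrow> bool" where
  "max_correctable m n a b h E \<longleftrightarrow> correctable m n a b h E \<and>
     \<not> (\<exists>E'. correctable m n a b h E' \<and> E \<subset> E')"

end

theory Submission
  imports Defs "HOL-Algebra.Multiplicative_Group"
begin

(* A linear code V on positions G corrects E iff no nonzero codeword vanishes outside E. Over a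
   field with q elements V then has at most q^|G - E| codewords, while a family of codewords that
   is diagonal on P (z_p is nonzero at p and vanishes on P - {p}) spans q^|P| of them.

   Let K = (m-a)(n-b). Information sets A, B of the column and row codes give a diagonal family on
   A x B inside the tensor code, so every pattern correctable in T(a,b,0) leaves at least K
   positions unerased. After shrinking both component codes to dimensions exactly m-a and n-b, the
   tensor code lies in the product code, which is determined by its K entries on A x B; at a
   maximal pattern every unerased position carries a witness codeword, so a maximal pattern of
   T(a,b,0) leaves exactly K positions unerased.

   h global checks are worth exactly h erasures. If a checked code corrects E, then its local part
   corrects a subset of E missing at most h positions: otherwise h+1 witnesses span more than q^h
   codewords supported in E, two of which the checks cannot tell apart. Conversely, adding the
   checks x_p = 0 for p in I to a local code that corrects E' makes it correct E' \<union> I. Counting unerased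
   positions then identifies the maximal patterns of T(a,b,h). *)

definition corrects_on :: "'i set \<Rightarrow> ('i \<Rightarrow> nat) set \<Rightarrow> 'i set \<Rightarrow> bool" where
  "corrects_on G V E \<longleftrightarrow> (\<forall>x\<in>V. \<forall>y\<in>V. (\<forall>p\<in>G - E. x p = y p) \<longrightarrow> x = y)"

lemma corrects_onI:
  "(\<And>x y. x \<in> V \<Longrightarrow> y \<in> V \<Longrightarrow> (\<And>p. p \<in> G - E \<Longrightarrow> x p = y p) \<Longrightarrow> x = y) \<Longrightarrow> corrects_on G V E"
  unfolding corrects_on_def by blast

lemma corrects_onD:
  "corrects_on G V E \<Longrightarrow> x \<in> V \<Longrightarrow> y \<in> V \<Longrightarrow> (\<And>p. p \<in> G - E \<Longrightarrow> x p = y p) \<Longrightarrow> x = y"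
  unfolding corrects_on_def by blast

lemma corrects_iff_corrects_on: "corrects C m n E \<longleftrightarrow> corrects_on (grid m n) C E"
  by (simp add: corrects_def corrects_on_def)

lemma corrects_on_subset: "U \<subseteq> V \<Longrightarrow> corrects_on G V E \<Longrightarrow> corrects_on G U E"
  unfolding corrects_on_def by blast

lemma finite_maximal_superset:
  assumes "finite G" "S \<subseteq> G" "Q S"
  obtains T where "S \<subseteq> T" "T \<subseteq> G" "Q T" "\<And>T'. T \<subset> T' \<Longrightarrow> T' \<subseteq> G \<Longrightarrow> \<not> Q T'"
proof -
  have "finite {T. T \<subseteq> G \<and> Q T}"
    using assms(1) by (rule rev_finite_subset[OF finite_Pow_iff[THEN iffD2]]) auto
  then obtain T where "T \<in> {T. T \<subseteq> G \<and> Q T}" "S \<subseteq> T"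
      "\<forall>T'\<in>{T. T \<subseteq> G \<and> Q T}. T \<subseteq> T' \<longrightarrow> T = T'"
    using finite_has_maximal2[of "{T. T \<subseteq> G \<and> Q T}" S] assms(2,3) by blast
  then show thesis by (intro that) auto
qed

lemma finite_grid: "finite (grid m n)"
  unfolding grid_def by simp

context ring
begin

lemma finsum_eq_single:
  assumes "finite K" "k0 \<in> K" "f k0 \<in> carrier R" "\<And>k. k \<in> K \<Longrightarrow> k \<noteq> k0 \<Longrightarrow> f k = \<zero>"
  shows "(\<Oplus>k\<in>K. f k) = f k0"
proof -
  have "(\<Oplus>k\<in>K. f k) = (\<Oplus>k\<in>K. if k0 = k then (\<lambda>_. f k0) k else \<zero>)"
    using assms by (intro finsum_cong') auto
  also have "\<dots> = f k0"
    using assms by (intro finsum_singleton) auto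
  finally show ?thesis .
qed

lemma finsum_diff:
  assumes "finite A" "f \<in> A \<rightarrow> carrier R" "g \<in> A \<rightarrow> carrier R"
  shows "(\<Oplus>i\<in>A. f i \<ominus> g i) = (\<Oplus>i\<in>A. f i) \<ominus> (\<Oplus>i\<in>A. g i)"
proof -
  have "(\<Oplus>i\<in>A. f i \<ominus> g i) = (\<Oplus>i\<in>A. f i \<oplus> \<ominus> \<one> \<otimes> g i)"
    using assms by (intro finsum_cong') (auto simp: minus_eq l_minus Pi_iff)
  also have "\<dots> = (\<Oplus>i\<in>A. f i) \<oplus> \<ominus> \<one> \<otimes> (\<Oplus>i\<in>A. g i)"
    using assms by (simp add: finsum_rdistr Pi_iff)
  also have "\<dots> = (\<Oplus>i\<in>A. f i) \<ominus> (\<Oplus>i\<in>A. g i)"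
    using assms by (simp add: minus_eq l_minus)
  finally show ?thesis .
qed

lemma l_minus_distrib:
  "x \<in> carrier R \<Longrightarrow> y \<in> carrier R \<Longrightarrow> z \<in> carrier R \<Longrightarrow> (x \<ominus> y) \<otimes> z = x \<otimes> z \<ominus> y \<otimes> z"
  by (simp add: minus_eq l_distr l_minus)

lemma r_minus_distrib:
  "x \<in> carrier R \<Longrightarrow> y \<in> carrier R \<Longrightarrow> z \<in> carrier R \<Longrightarrow> z \<otimes> (x \<ominus> y) = z \<otimes> x \<ominus> z \<otimes> y"
  by (simp add: minus_eq r_distr r_minus)

lemma finsum_mult_zero:
  assumes "g \<in> A \<rightarrow> carrier R"
  shows "(\<Oplus>p\<in>A. g p \<otimes> \<zero>) = \<zero>"
proof -
  have "(\<Oplus>p\<in>A. g p \<otimes> \<zero>) = (\<Oplus>p\<in>A. \<zero>)"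
    using assms by (intro finsum_cong') (auto simp: Pi_iff)
  then show ?thesis by simp
qed

lemma finsum_mult_diff:
  assumes "finite A" "g \<in> A \<rightarrow> carrier R" "x \<in> A \<rightarrow> carrier R" "y \<in> A \<rightarrow> carrier R"
  shows "(\<Oplus>p\<in>A. g p \<otimes> (x p \<ominus> y p)) = (\<Oplus>p\<in>A. g p \<otimes> x p) \<ominus> (\<Oplus>p\<in>A. g p \<otimes> y p)"
proof -
  have "(\<Oplus>p\<in>A. g p \<otimes> (x p \<ominus> y p)) = (\<Oplus>p\<in>A. g p \<otimes> x p \<ominus> g p \<otimes> y p)"
    using assms(2-4) by (intro finsum_cong') (auto simp: Pi_iff r_minus_distrib)
  also have "\<dots> = (\<Oplus>p\<in>A. g p \<otimes> x p) \<ominus> (\<Oplus>p\<in>A. g p \<otimes> y p)"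
    using assms by (intro finsum_diff) (auto simp: Pi_iff)
  finally show ?thesis .
qed

end

locale finite_field = field R for R :: "nat ring" (structure) +
  assumes finite_carrier: "finite (carrier R)"
begin

abbreviation q :: nat where "q \<equiv> card (carrier R)"

lemma one_less_card_carrier: "1 < q"
proof -
  have "card {\<zero>, \<one>} \<le> q"
    by (rule card_mono[OF finite_carrier]) simp
  then show ?thesis using zero_not_one by simp
qed

subsection \<open>Vectors, subspaces and linear combinations\<close>

lemma vecs_carrier: "v \<in> vecs R G \<Longrightarrow> v p \<in> carrier R"
  unfolding vecs_def by (cases "p \<in> G") auto

lemma vecs_outside: "v \<in> vecs R G \<Longrightarrow> p \<notin> G \<Longrightarrow> v p = \<zero>"
  unfolding vecs_def by simp

lemma finite_vecs: "finite G \<Longrightarrow> finite (vecs R G)"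
proof (rule inj_on_finite[where f = "\<lambda>x. restrict x G"])
  show "inj_on (\<lambda>x. restrict x G) (vecs R G)"
    by (rule inj_onI) (metis restrict_apply' vecs_outside ext)
  show "(\<lambda>x. restrict x G) ` vecs R G \<subseteq> (\<Pi>\<^sub>E i\<in>G. carrier R)"
    by (auto simp: vecs_carrier)
qed (simp add: finite_PiE finite_carrier)

lemma corrects_on_empty: "V \<subseteq> vecs R G \<Longrightarrow> corrects_on G V {}"
  unfolding corrects_on_def by (metis Diff_empty ext subsetD vecs_outside)

lemma card_le_if_corrects_on:
  assumes "finite G" "V \<subseteq> vecs R G" "corrects_on G V E"
  shows "card V \<le> q ^ card (G - E)"
proof -
  have "card V \<le> card (\<Pi>\<^sub>E i\<in>G - E. carrier R)"
  proof (rule card_inj_on_le[where f = "\<lambda>x. restrict x (G - E)"])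
    show "inj_on (\<lambda>x. restrict x (G - E)) V"
    proof (rule inj_onI)
      fix x y assume xy: "x \<in> V" "y \<in> V" and eq: "restrict x (G - E) = restrict y (G - E)"
      from xy show "x = y"
      proof (rule corrects_onD[OF assms(3)])
        fix p assume "p \<in> G - E"
        then show "x p = y p" using fun_cong[OF eq, of p] by simp
      qed
    qed
    show "(\<lambda>x. restrict x (G - E)) ` V \<subseteq> (\<Pi>\<^sub>E i\<in>G - E. carrier R)"
    proof (rule image_subsetI)
      fix x assume "x \<in> V"
      then have "x \<in> vecs R G" by (rule subsetD[OF assms(2)])
      then show "restrict x (G - E) \<in> (\<Pi>\<^sub>E i\<in>G - E. carrier R)"
        by (simp add: restrict_PiE_iff vecs_carrier)
    qed
  qed (simp add: assms(1) finite_PiE finite_carrier)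
  also have "\<dots> = q ^ card (G - E)"
    using assms(1) by (simp add: card_PiE)
  finally show ?thesis .
qed

lemma nth_carrier: "set cs \<subseteq> carrier R \<Longrightarrow> k < length cs \<Longrightarrow> cs ! k \<in> carrier R"
  by (auto dest: nth_mem)

lemma nth_vecs_carrier:
  assumes "set vs \<subseteq> vecs R G" "k < length vs"
  shows "(vs ! k) p \<in> carrier R"
proof -
  have "vs ! k \<in> vecs R G" using assms nth_mem by blast
  then show ?thesis by (rule vecs_carrier)
qed

lemma subspace_vecs: "is_subspace R G V \<Longrightarrow> V \<subseteq> vecs R G"
  unfolding is_subspace_def by simp

lemma subspace_carrier: "is_subspace R G V \<Longrightarrow> v \<in> V \<Longrightarrow> v p \<in> carrier R"
  by (rule vecs_carrier[OF subsetD[OF subspace_vecs]])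

lemma subspace_zero: "is_subspace R G V \<Longrightarrow> (\<lambda>_. \<zero>) \<in> V"
  unfolding is_subspace_def by simp

lemma subspace_add: "is_subspace R G V \<Longrightarrow> u \<in> V \<Longrightarrow> v \<in> V \<Longrightarrow> (\<lambda>i. u i \<oplus> v i) \<in> V"
  unfolding is_subspace_def by simp

lemma subspace_smult:
  "is_subspace R G V \<Longrightarrow> c \<in> carrier R \<Longrightarrow> v \<in> V \<Longrightarrow> (\<lambda>i. c \<otimes> v i) \<in> V"
  unfolding is_subspace_def by simp

lemma subspace_diff:
  assumes "is_subspace R G V" "x \<in> V" "y \<in> V"
  shows "(\<lambda>i. x i \<ominus> y i) \<in> V"
proof -
  have "(\<lambda>i. x i \<oplus> (\<lambda>i. \<ominus> \<one> \<otimes> y i) i) \<in> V"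
    using assms by (intro subspace_add subspace_smult) auto
  moreover have "(\<lambda>i. x i \<oplus> (\<lambda>i. \<ominus> \<one> \<otimes> y i) i) = (\<lambda>i. x i \<ominus> y i)"
    using subspace_carrier[OF assms(1)] assms(2,3) by (simp add: minus_eq l_minus)
  ultimately show ?thesis by simp
qed

lemma subspace_vecs_self: "is_subspace R G (vecs R G)"
  unfolding is_subspace_def vecs_def by auto

lemma subspace_finsum:
  assumes "is_subspace R G V" "finite K" "c \<in> K \<rightarrow> carrier R" "z \<in> K \<rightarrow> V"
  shows "(\<lambda>i. \<Oplus>k\<in>K. c k \<otimes> z k i) \<in> V"
  using assms(2-4)
proof (induction K rule: finite_induct)
  case empty
  then show ?case using subspace_zero[OF assms(1)] by simp
next
  case (insert k0 K)
  have "(\<lambda>i. (\<lambda>i. c k0 \<otimes> z k0 i) i \<oplus> (\<lambda>i. \<Oplus>k\<in>K. c k \<otimes> z k i) i) \<in> V"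
    using insert by (intro subspace_add[OF assms(1)] subspace_smult[OF assms(1)]) auto
  moreover have "c k \<otimes> z k i \<in> carrier R" if "k \<in> insert k0 K" for k i
    using that insert.prems subspace_carrier[OF assms(1)] by blast
  ultimately show ?case
    using insert.hyps by (simp add: Pi_iff)
qed

lemma subspace_lin_comb:
  assumes "is_subspace R G V" "set vs \<subseteq> V" "length cs = length vs" "set cs \<subseteq> carrier R"
  shows "lin_comb R cs vs \<in> V"
  unfolding lin_comb_def using assms
  by (intro subspace_finsum) (auto simp: nth_carrier dest!: nth_mem)

lemma lin_comb_append:
  assumes "length cs = length vs" "set cs \<subseteq> carrier R" "set vs \<subseteq> vecs R G"
    "length ds = length ws" "set ds \<subseteq> carrier R" "set ws \<subseteq> vecs R G"
  shows "lin_comb R (cs @ ds) (vs @ ws) p = lin_comb R cs vs p \<oplus> lin_comb R ds ws p"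
proof -
  let ?f = "\<lambda>k. (cs @ ds) ! k \<otimes> ((vs @ ws) ! k) p"
  have f: "?f k \<in> carrier R" if "k < length vs + length ws" for k
  proof (rule m_closed)
    show "(cs @ ds) ! k \<in> carrier R"
      using that assms by (intro nth_carrier) auto
    show "((vs @ ws) ! k) p \<in> carrier R"
      using that assms by (intro nth_vecs_carrier[where G = G]) auto
  qed
  have f': "(cs @ ds) ! (length vs + k) \<otimes> (ws ! k) p \<in> carrier R" if "k < length ws" for k
    using f[of "length vs + k"] that by simp
  have "(+) (length vs) ` {..<length ws} = {length vs..<length vs + length ws}"
    by (simp add: lessThan_atLeast0 add.commute)
  then have split: "{..<length vs + length ws} = {..<length vs} \<union> (+) (length vs) ` {..<length ws}"
    by (simp add: ivl_disj_un_one(2))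
  have "lin_comb R (cs @ ds) (vs @ ws) p
      = (\<Oplus>k\<in>{..<length vs}. ?f k) \<oplus> (\<Oplus>k\<in>(+) (length vs) ` {..<length ws}. ?f k)"
    unfolding lin_comb_def length_append split using f f'
    by (subst finsum_Un_disjoint) (auto simp: Pi_iff)
  also have "(\<Oplus>k\<in>(+) (length vs) ` {..<length ws}. ?f k) = (\<Oplus>k\<in>{..<length ws}. ?f (length vs + k))"
    by (rule finsum_reindex) (use f' in auto)
  also have "(\<Oplus>k\<in>{..<length vs}. ?f k) = lin_comb R cs vs p"
    unfolding lin_comb_def
  proof (rule finsum_cong')
    show "(\<lambda>k. cs ! k \<otimes> (vs ! k) p) \<in> {..<length vs} \<rightarrow> carrier R"
      using assms(1-3) by (auto intro!: nth_carrier nth_vecs_carrier[where G = G])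
  qed (use assms(1) in \<open>simp_all add: nth_append\<close>)
  also have "(\<Oplus>k\<in>{..<length ws}. ?f (length vs + k)) = lin_comb R ds ws p"
    unfolding lin_comb_def by (simp add: nth_append assms(1))
  finally show ?thesis .
qed

lemma lin_comb_smult:
  assumes "d \<in> carrier R" "length cs = length vs" "set cs \<subseteq> carrier R" "set vs \<subseteq> vecs R G"
  shows "lin_comb R (map (\<lambda>c. d \<otimes> c) cs) vs p = d \<otimes> lin_comb R cs vs p"
proof -
  have c: "cs ! k \<in> carrier R" "(vs ! k) p \<in> carrier R" if "k < length vs" for k
    using nth_carrier[OF assms(3)] nth_vecs_carrier[OF assms(4)] that assms(2) by auto
  have "d \<otimes> lin_comb R cs vs p = (\<Oplus>k\<in>{..<length vs}. d \<otimes> (cs ! k \<otimes> (vs ! k) p))"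
    unfolding lin_comb_def by (rule finsum_rdistr) (use assms(1) c in auto)
  also have "\<dots> = lin_comb R (map (\<lambda>c. d \<otimes> c) cs) vs p"
    unfolding lin_comb_def
  proof (rule finsum_cong')
    fix k assume k: "k \<in> {..<length vs}"
    then show "d \<otimes> (cs ! k \<otimes> (vs ! k) p) = map (\<lambda>c. d \<otimes> c) cs ! k \<otimes> (vs ! k) p"
      using assms(1,2) c[of k] by (simp add: m_assoc)
  qed (use assms(1,2) c in auto)
  finally show ?thesis by (rule sym)
qed

lemma lin_comb_diff:
  assumes "length cs = length vs" "length ds = length vs" "set cs \<subseteq> carrier R" "set ds \<subseteq> carrier R"
    "set vs \<subseteq> vecs R G"
  shows "lin_comb R (map2 (\<lambda>c d. c \<ominus> d) cs ds) vs p = lin_comb R cs vs p \<ominus> lin_comb R ds vs p"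
proof -
  have c: "cs ! k \<in> carrier R" "ds ! k \<in> carrier R" "(vs ! k) p \<in> carrier R" if "k < length vs" for k
    using nth_carrier[OF assms(3)] nth_carrier[OF assms(4)] nth_vecs_carrier[OF assms(5)] that assms(1,2)
    by auto
  have "lin_comb R (map2 (\<lambda>c d. c \<ominus> d) cs ds) vs p
      = (\<Oplus>k\<in>{..<length vs}. cs ! k \<otimes> (vs ! k) p \<ominus> ds ! k \<otimes> (vs ! k) p)"
    unfolding lin_comb_def
  proof (rule finsum_cong')
    fix k assume "k \<in> {..<length vs}"
    then have k: "k < length vs" by simp
    then have "map2 (\<lambda>c d. c \<ominus> d) cs ds ! k = cs ! k \<ominus> ds ! k"
      using assms(1,2) by simp
    then show "map2 (\<lambda>c d. c \<ominus> d) cs ds ! k \<otimes> (vs ! k) p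
        = cs ! k \<otimes> (vs ! k) p \<ominus> ds ! k \<otimes> (vs ! k) p"
      by (simp only: l_minus_distrib[OF c[OF k]])
  qed (use c in auto)
  also have "\<dots> = lin_comb R cs vs p \<ominus> lin_comb R ds vs p"
    unfolding lin_comb_def by (rule finsum_diff) (use c in auto)
  finally show ?thesis .
qed

lemma lin_comb_carrier:
  assumes "set vs \<subseteq> vecs R G" "length cs = length vs" "set cs \<subseteq> carrier R"
  shows "lin_comb R cs vs p \<in> carrier R"
proof -
  have "lin_comb R cs vs \<in> vecs R G"
    by (rule subspace_lin_comb[OF subspace_vecs_self assms])
  then show ?thesis by (rule vecs_carrier)
qed

lemma span_of_subset:
  assumes "is_subspace R G V" "S \<subseteq> V"
  shows "span_of R S \<subseteq> V"
proof
  fix u assume "u \<in> span_of R S"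
  then obtain cs vs where "u = lin_comb R cs vs" "set vs \<subseteq> S" "length cs = length vs"
      "set cs \<subseteq> carrier R"
    unfolding span_of_def by blast
  then show "u \<in> V" using subspace_lin_comb[OF assms(1), of vs cs] assms(2) by simp
qed

lemma span_of_superset:
  assumes "S \<subseteq> vecs R G"
  shows "S \<subseteq> span_of R S"
proof
  fix w assume w: "w \<in> S"
  have "lin_comb R [\<one>] [w] = w"
  proof
    fix p
    have "w p \<in> carrier R" using subsetD[OF assms w] by (rule vecs_carrier)
    then show "lin_comb R [\<one>] [w] p = w p" by (simp add: lin_comb_def lessThan_Suc)
  qed
  moreover have "lin_comb R [\<one>] [w] \<in> span_of R S"
    using w unfolding span_of_def by force
  ultimately show "w \<in> span_of R S" by simp
qed

lemma span_of_mono: "S \<subseteq> T \<Longrightarrow> span_of R S \<subseteq> span_of R T"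
  unfolding span_of_def by blast

lemma span_of_subspace:
  assumes "S \<subseteq> vecs R G"
  shows "is_subspace R G (span_of R S)"
  unfolding is_subspace_def
proof (intro conjI ballI)
  show "span_of R S \<subseteq> vecs R G"
    by (rule span_of_subset[OF subspace_vecs_self assms])
  show "(\<lambda>_. \<zero>) \<in> span_of R S"
    unfolding span_of_def
    by (rule CollectI, rule exI[of _ "[]"], rule exI[of _ "[]"]) (simp add: lin_comb_def)
next
  fix u v assume "u \<in> span_of R S" "v \<in> span_of R S"
  then obtain cs vs ds ws where u: "u = lin_comb R cs vs" "set vs \<subseteq> S" "length cs = length vs"
      "set cs \<subseteq> carrier R" and v: "v = lin_comb R ds ws" "set ws \<subseteq> S" "length ds = length ws"
      "set ds \<subseteq> carrier R"
    unfolding span_of_def by blast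
  have "(\<lambda>i. u i \<oplus> v i) = lin_comb R (cs @ ds) (vs @ ws)"
  proof
    fix i show "u i \<oplus> v i = lin_comb R (cs @ ds) (vs @ ws) i"
      using lin_comb_append[of cs vs G ds ws i] u v assms by auto
  qed
  then show "(\<lambda>i. u i \<oplus> v i) \<in> span_of R S"
    using u v unfolding span_of_def by force
next
  fix c u assume c: "c \<in> carrier R" and "u \<in> span_of R S"
  then obtain cs vs where u: "u = lin_comb R cs vs" "set vs \<subseteq> S" "length cs = length vs"
      "set cs \<subseteq> carrier R"
    unfolding span_of_def by blast
  have "(\<lambda>i. c \<otimes> u i) = lin_comb R (map (\<lambda>d. c \<otimes> d) cs) vs"
  proof
    fix i show "c \<otimes> u i = lin_comb R (map (\<lambda>d. c \<otimes> d) cs) vs i"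
      using lin_comb_smult[of c cs vs G i] u c assms by auto
  qed
  then show "(\<lambda>i. c \<otimes> u i) \<in> span_of R S"
    using u c unfolding span_of_def by force
qed

lemma subspace_vanishing_on:
  assumes "is_subspace R G V"
  shows "is_subspace R G {v \<in> V. \<forall>i\<in>Z. v i = \<zero>}"
  unfolding is_subspace_def
proof (intro conjI ballI)
  show "{v \<in> V. \<forall>i\<in>Z. v i = \<zero>} \<subseteq> vecs R G"
    using subspace_vecs[OF assms] by blast
  show "(\<lambda>_. \<zero>) \<in> {v \<in> V. \<forall>i\<in>Z. v i = \<zero>}"
    using subspace_zero[OF assms] by simp
next
  fix u v assume "u \<in> {v \<in> V. \<forall>i\<in>Z. v i = \<zero>}" "v \<in> {v \<in> V. \<forall>i\<in>Z. v i = \<zero>}"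
  then show "(\<lambda>i. u i \<oplus> v i) \<in> {v \<in> V. \<forall>i\<in>Z. v i = \<zero>}"
    using subspace_add[OF assms] by simp
next
  fix c v assume "c \<in> carrier R" "v \<in> {v \<in> V. \<forall>i\<in>Z. v i = \<zero>}"
  then show "(\<lambda>i. c \<otimes> v i) \<in> {v \<in> V. \<forall>i\<in>Z. v i = \<zero>}"
    using subspace_smult[OF assms] by simp
qed

subsection \<open>Counting codewords\<close>

definition diagonal_on :: "'i set \<Rightarrow> ('i \<Rightarrow> 'i \<Rightarrow> nat) \<Rightarrow> bool" where
  "diagonal_on P z \<longleftrightarrow> (\<forall>p\<in>P. z p p \<noteq> \<zero> \<and> (\<forall>p'\<in>P. p' \<noteq> p \<longrightarrow> z p p' = \<zero>))"

definition family_comb :: "'i set \<Rightarrow> ('i \<Rightarrow> 'j \<Rightarrow> nat) \<Rightarrow> ('i \<Rightarrow> nat) \<Rightarrow> 'j \<Rightarrow> nat" where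
  "family_comb P z c = (\<lambda>i. \<Oplus>p\<in>P. c p \<otimes> z p i)"

lemma family_comb_diagonal:
  assumes "finite P" "diagonal_on P z" "\<And>p i. p \<in> P \<Longrightarrow> z p i \<in> carrier R"
    "c \<in> P \<rightarrow>\<^sub>E carrier R" "p \<in> P"
  shows "family_comb P z c p = c p \<otimes> z p p"
  unfolding family_comb_def
proof (rule finsum_eq_single[OF assms(1,5)])
  show "c p \<otimes> z p p \<in> carrier R"
    using PiE_mem[OF assms(4,5)] assms(3)[OF assms(5)] by simp
  fix p' assume p': "p' \<in> P" "p' \<noteq> p"
  then have "z p' p = \<zero>"
    using assms(2,5) unfolding diagonal_on_def by auto
  then show "c p' \<otimes> z p' p = \<zero>"
    using PiE_mem[OF assms(4) p'(1)] by simp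
qed

lemma inj_on_family_comb:
  assumes "finite P" "diagonal_on P z" "\<And>p i. p \<in> P \<Longrightarrow> z p i \<in> carrier R"
  shows "inj_on (family_comb P z) (P \<rightarrow>\<^sub>E carrier R)"
proof (rule inj_onI)
  fix c d assume c: "c \<in> P \<rightarrow>\<^sub>E carrier R" and d: "d \<in> P \<rightarrow>\<^sub>E carrier R"
    and eq: "family_comb P z c = family_comb P z d"
  show "c = d"
  proof (rule PiE_ext[OF c d])
    fix p assume p: "p \<in> P"
    have "c p \<otimes> z p p = d p \<otimes> z p p"
      using family_comb_diagonal[OF assms c p] family_comb_diagonal[OF assms d p] eq by simp
    moreover have "z p p \<noteq> \<zero>"
      using assms(2) p unfolding diagonal_on_def by blast
    ultimately show "c p = d p"
      using m_rcancel[OF _ assms(3)[OF p] PiE_mem[OF c p] PiE_mem[OF d p]] by simp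
  qed
qed

lemma diagonal_family_span:
  assumes "finite P" "is_subspace R G V" "z \<in> P \<rightarrow> V" "diagonal_on P z"
  obtains S where "S \<subseteq> V" "card S = q ^ card P"
    "\<And>x i. x \<in> S \<Longrightarrow> (\<And>p. p \<in> P \<Longrightarrow> z p i = \<zero>) \<Longrightarrow> x i = \<zero>"
proof (rule that)
  have zc: "z p i \<in> carrier R" if "p \<in> P" for p i
    using funcset_mem[OF assms(3) that] by (rule subspace_carrier[OF assms(2)])
  show "family_comb P z ` (P \<rightarrow>\<^sub>E carrier R) \<subseteq> V"
  proof (rule image_subsetI)
    fix c assume "c \<in> P \<rightarrow>\<^sub>E carrier R"
    then have "c \<in> P \<rightarrow> carrier R" by (simp add: PiE_iff)
    then show "family_comb P z c \<in> V"
      unfolding family_comb_def by (rule subspace_finsum[OF assms(2,1) _ assms(3)])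
  qed
  show "card (family_comb P z ` (P \<rightarrow>\<^sub>E carrier R)) = q ^ card P"
    using card_image[OF inj_on_family_comb[OF assms(1,4) zc]] assms(1) by (simp add: card_PiE)
  show "x i = \<zero>" if x: "x \<in> family_comb P z ` (P \<rightarrow>\<^sub>E carrier R)"
    and zi: "\<And>p. p \<in> P \<Longrightarrow> z p i = \<zero>" for x i
  proof -
    from x obtain c where xc: "x = family_comb P z c" and c: "c \<in> P \<rightarrow>\<^sub>E carrier R"
      by (rule imageE)
    have "(\<Oplus>p\<in>P. c p \<otimes> z p i) = (\<Oplus>p\<in>P. \<zero>)"
    proof (rule finsum_cong')
      fix p assume "p \<in> P"
      then show "c p \<otimes> z p i = \<zero>" using zi PiE_mem[OF c] by simp
    qed auto
    then show ?thesis unfolding xc family_comb_def by simp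
  qed
qed

lemma card_ge_if_diagonal_family:
  assumes "finite G" "is_subspace R G V" "finite P" "z \<in> P \<rightarrow> V" "diagonal_on P z"
  shows "q ^ card P \<le> card V"
proof -
  obtain S where "S \<subseteq> V" "card S = q ^ card P"
    by (rule diagonal_family_span[OF assms(3,2,4,5)])
  moreover have "finite V"
    using finite_vecs[OF assms(1)] subspace_vecs[OF assms(2)] by (rule rev_finite_subset)
  ultimately show ?thesis using card_mono by metis
qed

lemma obtain_witness_if_not_corrects_on:
  assumes "is_subspace R G V" "U \<subseteq> V" "corrects_on G U D" "\<not> corrects_on G U (insert p D)"
  obtains w where "w \<in> V" "w p \<noteq> \<zero>" "\<And>i. i \<notin> insert p D \<Longrightarrow> w i = \<zero>"
proof -
  obtain x y where xy: "x \<in> U" "y \<in> U" "x \<noteq> y" and agree: "\<And>i. i \<in> G - insert p D \<Longrightarrow> x i = y i"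
    using assms(4) unfolding corrects_on_def by blast
  have xyV: "x \<in> V" "y \<in> V" using xy(1,2) assms(2) by auto
  have xyc: "x i \<in> carrier R" "y i \<in> carrier R" for i
    using subspace_carrier[OF assms(1) xyV(1)] subspace_carrier[OF assms(1) xyV(2)] by auto
  define w where "w = (\<lambda>i. x i \<ominus> y i)"
  have "w \<in> V" unfolding w_def by (rule subspace_diff[OF assms(1) xyV])
  moreover have "w p \<noteq> \<zero>"
  proof
    assume "w p = \<zero>"
    then have xyp: "x p = y p" unfolding w_def using xyc by simp
    have "x = y"
    proof (rule corrects_onD[OF assms(3) xy(1,2)])
      fix i assume "i \<in> G - D"
      then show "x i = y i" using xyp agree[of i] by (cases "i = p") auto
    qed
    then show False using xy(3) by simp
  qed
  moreover have "w i = \<zero>" if i: "i \<notin> insert p D" for i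
  proof (cases "i \<in> G")
    case True
    then show ?thesis unfolding w_def using agree[of i] i xyc by simp
  next
    case False
    have xv: "x \<in> vecs R G" and yv: "y \<in> vecs R G" using xyV subspace_vecs[OF assms(1)] by auto
    show ?thesis
      unfolding w_def using vecs_outside[OF xv False] vecs_outside[OF yv False] by (simp add: minus_eq)
  qed
  ultimately show thesis by (rule that)
qed

lemma obtain_diagonal_witnesses:
  assumes "is_subspace R G V" "U \<subseteq> V" "corrects_on G U D" "P \<inter> D = {}"
    "\<And>p. p \<in> P \<Longrightarrow> \<not> corrects_on G U (insert p D)"
  obtains z where "z \<in> P \<rightarrow> V" "diagonal_on P z" "\<And>p i. p \<in> P \<Longrightarrow> i \<notin> insert p D \<Longrightarrow> z p i = \<zero>"
proof -
  have "\<forall>p\<in>P. \<exists>w. w \<in> V \<and> w p \<noteq> \<zero> \<and> (\<forall>i. i \<notin> insert p D \<longrightarrow> w i = \<zero>)"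
  proof
    fix p assume "p \<in> P"
    obtain w where "w \<in> V" "w p \<noteq> \<zero>" "\<And>i. i \<notin> insert p D \<Longrightarrow> w i = \<zero>"
      by (rule obtain_witness_if_not_corrects_on[OF assms(1-3) assms(5)[OF \<open>p \<in> P\<close>]]) blast
    then show "\<exists>w. w \<in> V \<and> w p \<noteq> \<zero> \<and> (\<forall>i. i \<notin> insert p D \<longrightarrow> w i = \<zero>)" by blast
  qed
  then obtain z where z: "\<forall>p\<in>P. z p \<in> V \<and> z p p \<noteq> \<zero> \<and> (\<forall>i. i \<notin> insert p D \<longrightarrow> z p i = \<zero>)"
    by metis
  show thesis
  proof (rule that)
    show "z \<in> P \<rightarrow> V" using z by auto
    show "diagonal_on P z"
      unfolding diagonal_on_def using z assms(4) by auto
    show "z p i = \<zero>" if "p \<in> P" "i \<notin> insert p D" for p i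
      using z that by auto
  qed
qed

lemma obtain_maximal_corrected_subset:
  assumes "finite E" "V \<subseteq> vecs R G"
  obtains D where "D \<subseteq> E" "corrects_on G V D" "\<And>p. p \<in> E - D \<Longrightarrow> \<not> corrects_on G V (insert p D)"
proof -
  obtain D where "{} \<subseteq> D" and D: "D \<subseteq> E" "corrects_on G V D"
      and maximal: "\<And>T. D \<subset> T \<Longrightarrow> T \<subseteq> E \<Longrightarrow> \<not> corrects_on G V T"
    by (rule finite_maximal_superset[where Q = "corrects_on G V", OF assms(1) empty_subsetI
          corrects_on_empty[OF assms(2)]]) blast
  have "\<not> corrects_on G V (insert p D)" if "p \<in> E - D" for p
  proof (rule maximal)
    show "D \<subset> insert p D" "insert p D \<subseteq> E" using that D(1) by auto
  qed
  with D show thesis by (rule that)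
qed

lemma card_ge_if_maximally_corrects:
  assumes "finite G" "is_subspace R G V" "U \<subseteq> V" "corrects_on G U D"
    "\<And>p. p \<in> G - D \<Longrightarrow> \<not> corrects_on G U (insert p D)"
  shows "q ^ card (G - D) \<le> card V"
proof -
  obtain z where "z \<in> G - D \<rightarrow> V" "diagonal_on (G - D) z"
    by (rule obtain_diagonal_witnesses[where P = "G - D", OF assms(2-4) _ assms(5)]) blast
  then show ?thesis using assms(1) by (intro card_ge_if_diagonal_family[OF assms(1,2)]) auto
qed

lemma inj_on_lin_comb:
  assumes "lin_indep R vs" "set vs \<subseteq> vecs R G"
  shows "inj_on (\<lambda>cs. lin_comb R cs vs) {cs. set cs \<subseteq> carrier R \<and> length cs = length vs}"
proof (rule inj_onI)
  fix cs ds
  assume cs: "cs \<in> {cs. set cs \<subseteq> carrier R \<and> length cs = length vs}"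
    and ds: "ds \<in> {cs. set cs \<subseteq> carrier R \<and> length cs = length vs}"
    and eq: "lin_comb R cs vs = lin_comb R ds vs"
  define es where "es = map2 (\<lambda>c d. c \<ominus> d) cs ds"
  have es: "length es = length vs" "set es \<subseteq> carrier R"
    using cs ds unfolding es_def by (auto simp: set_zip intro!: minus_closed nth_carrier)
  have "lin_comb R es vs = (\<lambda>_. \<zero>)"
  proof
    fix p
    have "lin_comb R es vs p = lin_comb R cs vs p \<ominus> lin_comb R ds vs p"
      unfolding es_def using cs ds by (intro lin_comb_diff[OF _ _ _ _ assms(2)]) auto
    also have "\<dots> = \<zero>"
      using eq lin_comb_carrier[OF assms(2), of ds p] ds by simp
    finally show "lin_comb R es vs p = \<zero>" .
  qed
  then have es0: "\<forall>i<length vs. es ! i = \<zero>"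
    using assms(1) es unfolding lin_indep_def by blast
  show "cs = ds"
  proof (rule nth_equalityI)
    show "length cs = length ds" using cs ds by simp
    fix i assume i: "i < length cs"
    then have "cs ! i \<ominus> ds ! i = \<zero>"
      using es0 cs ds by (simp add: es_def)
    moreover have "cs ! i \<in> carrier R" "ds ! i \<in> carrier R"
      using cs ds i by (auto intro!: nth_carrier)
    ultimately show "cs ! i = ds ! i" by simp
  qed
qed

lemma card_ge_if_dim_ge:
  assumes "finite G" "is_subspace R G C" "dim_ge R C k"
  shows "q ^ k \<le> card C"
proof -
  obtain vs where vs: "length vs = k" "set vs \<subseteq> C" "lin_indep R vs"
    using assms(3) unfolding dim_ge_def by blast
  let ?L = "{cs. set cs \<subseteq> carrier R \<and> length cs = length vs}"
  have "inj_on (\<lambda>cs. lin_comb R cs vs) ?L"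
    by (rule inj_on_lin_comb[OF vs(3) order_trans[OF vs(2) subspace_vecs[OF assms(2)]]])
  moreover have "(\<lambda>cs. lin_comb R cs vs) ` ?L \<subseteq> C"
    using subspace_lin_comb[OF assms(2)] vs(2) by auto
  moreover have "finite C"
    using finite_vecs[OF assms(1)] subspace_vecs[OF assms(2)] by (rule rev_finite_subset)
  ultimately have "card ?L \<le> card C" by (rule card_inj_on_le)
  moreover have "card ?L = q ^ k"
    unfolding vs(1) by (rule card_lists_length_eq[OF finite_carrier])
  ultimately show ?thesis by simp
qed

lemma obtain_information_set:
  assumes "finite G" "lin_code R G k C"
  obtains A z where "A \<subseteq> G" "k \<le> card A" "corrects_on G C (G - A)" "z \<in> A \<rightarrow> C" "diagonal_on A z"
proof -
  have sub: "is_subspace R G C" and dim: "dim_ge R C k"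
    using assms(2) unfolding lin_code_def by auto
  obtain D where D: "D \<subseteq> G" "corrects_on G C D" "\<And>p. p \<in> G - D \<Longrightarrow> \<not> corrects_on G C (insert p D)"
    by (rule obtain_maximal_corrected_subset[OF assms(1) subspace_vecs[OF sub]]) blast
  have "q ^ k \<le> card C"
    by (rule card_ge_if_dim_ge[OF assms(1) sub dim])
  also have "\<dots> \<le> q ^ card (G - D)"
    by (rule card_le_if_corrects_on[OF assms(1) subspace_vecs[OF sub] D(2)])
  finally have "k \<le> card (G - D)"
    by (rule power_le_imp_le_exp[OF one_less_card_carrier])
  obtain z where "z \<in> G - D \<rightarrow> C" "diagonal_on (G - D) z"
    by (rule obtain_diagonal_witnesses[where P = "G - D", OF sub order_refl D(2) _ D(3)]) blast
  moreover have "G - (G - D) = D" using D(1) by auto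
  ultimately show thesis
    using \<open>k \<le> card (G - D)\<close> D(2) by (intro that[of "G - D" z]) auto
qed

lemma lin_indep_diagonal:
  assumes "distinct e" "diagonal_on (set e) z" "z \<in> set e \<rightarrow> vecs R G"
  shows "lin_indep R (map z e)"
  unfolding lin_indep_def
proof (intro allI impI)
  fix cs j
  assume cs: "length cs = length (map z e) \<and> set cs \<subseteq> carrier R \<and> lin_comb R cs (map z e) = (\<lambda>_. \<zero>)"
    and j: "j < length (map z e)"
  have zc: "z p i \<in> carrier R" if "p \<in> set e" for p i
    using funcset_mem[OF assms(3) that] by (rule vecs_carrier)
  have csc: "cs ! k \<in> carrier R" if "k < length e" for k
    using cs that by (intro nth_carrier) auto
  have "lin_comb R cs (map z e) (e ! j) = (\<Oplus>k\<in>{..<length e}. cs ! k \<otimes> z (e ! k) (e ! j))"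
    unfolding lin_comb_def
  proof (rule finsum_cong')
    show "(\<lambda>k. cs ! k \<otimes> z (e ! k) (e ! j)) \<in> {..<length e} \<rightarrow> carrier R"
      by (auto intro!: csc zc nth_mem)
  qed simp_all
  also have "\<dots> = cs ! j \<otimes> z (e ! j) (e ! j)"
  proof (rule finsum_eq_single)
    show "j \<in> {..<length e}" using j by simp
    show "cs ! j \<otimes> z (e ! j) (e ! j) \<in> carrier R"
      using j csc zc by simp
    fix k assume k: "k \<in> {..<length e}" "k \<noteq> j"
    then have "e ! k \<noteq> e ! j"
      using assms(1) j by (simp add: nth_eq_iff_index_eq)
    then have "z (e ! k) (e ! j) = \<zero>"
      using assms(2) k j unfolding diagonal_on_def by simp
    then show "cs ! k \<otimes> z (e ! k) (e ! j) = \<zero>"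
      using csc k by simp
  qed simp
  finally have "cs ! j \<otimes> z (e ! j) (e ! j) = \<zero>"
    using cs by simp
  moreover have "z (e ! j) (e ! j) \<noteq> \<zero>"
    using assms(2) j unfolding diagonal_on_def by simp
  ultimately show "cs ! j = \<zero>"
    using integral_iff[OF csc zc] j by simp
qed

lemma corrects_on_vanishing_union:
  assumes "corrects_on G L E"
  shows "corrects_on G {x \<in> L. \<forall>i\<in>I. x i = \<zero>} (E \<union> I)"
proof (rule corrects_onI)
  fix x y assume x: "x \<in> {x \<in> L. \<forall>i\<in>I. x i = \<zero>}" and y: "y \<in> {x \<in> L. \<forall>i\<in>I. x i = \<zero>}"
    and eq: "\<And>p. p \<in> G - (E \<union> I) \<Longrightarrow> x p = y p"
  show "x = y"
  proof (rule corrects_onD[OF assms])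
    show "x \<in> L" "y \<in> L" using x y by auto
    fix p assume "p \<in> G - E"
    then show "x p = y p" using x y eq[of p] by (cases "p \<in> I") auto
  qed
qed

lemma obtain_subcode_with_information_set:
  assumes "finite G" "lin_code R G k C"
  obtains C' A where "C' \<subseteq> C" "lin_code R G k C'" "A \<subseteq> G" "card A = k" "corrects_on G C' (G - A)"
proof -
  have sub: "is_subspace R G C" using assms(2) unfolding lin_code_def by simp
  obtain A z where A: "A \<subseteq> G" "k \<le> card A" "corrects_on G C (G - A)" "z \<in> A \<rightarrow> C" "diagonal_on A z"
    by (rule obtain_information_set[OF assms])
  obtain A0 where A0: "A0 \<subseteq> A" "card A0 = k" "finite A0"
    by (rule obtain_subset_with_card_n[OF A(2)])
  define C' where "C' = {v \<in> C. \<forall>i\<in>A - A0. v i = \<zero>}"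
  have sub': "is_subspace R G C'"
    unfolding C'_def by (rule subspace_vanishing_on[OF sub])
  obtain e where e: "set e = A0" "distinct e"
    using finite_distinct_list[OF A0(3)] by blast
  have zC': "z p \<in> C'" if "p \<in> A0" for p
  proof -
    have "p \<in> A" using that A0(1) by blast
    then show ?thesis
      unfolding C'_def using A(4,5) that unfolding diagonal_on_def by auto
  qed
  have "lin_indep R (map z e)"
  proof (rule lin_indep_diagonal[OF e(2)])
    show "diagonal_on (set e) z"
      using A(5) A0(1) e(1) unfolding diagonal_on_def by blast
    show "z \<in> set e \<rightarrow> vecs R G"
      using zC' subspace_vecs[OF sub'] e(1) by auto
  qed
  then have dim: "dim_ge R C' k"
    unfolding dim_ge_def using zC' e A0(2) distinct_card[OF e(2)]
    by (intro exI[of _ "map z e"]) auto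
  have "G - A \<union> (A - A0) = G - A0" using A(1) A0(1) by blast
  then have "corrects_on G C' (G - A0)"
    using corrects_on_vanishing_union[OF A(3), of "A - A0"] unfolding C'_def by simp
  with dim sub' A(1) A0(1,2) show thesis
    by (intro that[of C' A0]) (auto simp: C'_def lin_code_def)
qed

subsection \<open>Tensor product codes\<close>

lemma tensor_generators_vecs:
  assumes "Ccol \<subseteq> vecs R {1..m}" "Crow \<subseteq> vecs R {1..n}"
  shows "{(\<lambda>(i, j). u i \<otimes> v j) | u v. u \<in> Ccol \<and> v \<in> Crow} \<subseteq> vecs R (grid m n)"
proof
  fix w assume "w \<in> {(\<lambda>(i, j). u i \<otimes> v j) | u v. u \<in> Ccol \<and> v \<in> Crow}"
  then obtain u v where w: "w = (\<lambda>(i, j). u i \<otimes> v j)" and "u \<in> Ccol" "v \<in> Crow" by blast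
  then have u: "u \<in> vecs R {1..m}" and v: "v \<in> vecs R {1..n}" using assms by auto
  have "w p \<in> carrier R" for p
    unfolding w using vecs_carrier[OF u] vecs_carrier[OF v] by (simp split: prod.split)
  moreover have "w p = \<zero>" if "p \<notin> grid m n" for p
  proof (cases p)
    case (Pair i j)
    then have "i \<notin> {1..m} \<or> j \<notin> {1..n}" using that unfolding grid_def by auto
    then show ?thesis
      unfolding w Pair using vecs_outside[OF u, of i] vecs_outside[OF v, of j]
        vecs_carrier[OF u, of i] vecs_carrier[OF v, of j] by auto
  qed
  ultimately show "w \<in> vecs R (grid m n)" unfolding vecs_def by auto
qed

lemma tensor_code_subspace:
  assumes "is_subspace R {1..m} Ccol" "is_subspace R {1..n} Crow"
  shows "is_subspace R (grid m n) (tensor_code R Ccol Crow)"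
  unfolding tensor_code_def
  by (rule span_of_subspace[OF tensor_generators_vecs[OF subspace_vecs[OF assms(1)] subspace_vecs[OF assms(2)]]])

lemma tensor_in_tensor_code:
  assumes "is_subspace R {1..m} Ccol" "is_subspace R {1..n} Crow" "u \<in> Ccol" "v \<in> Crow"
  shows "(\<lambda>(i, j). u i \<otimes> v j) \<in> tensor_code R Ccol Crow"
proof -
  have "(\<lambda>(i, j). u i \<otimes> v j) \<in> {(\<lambda>(i, j). u i \<otimes> v j) | u v. u \<in> Ccol \<and> v \<in> Crow}"
    using assms(3,4) by blast
  then show ?thesis
    unfolding tensor_code_def
    using span_of_superset[OF tensor_generators_vecs[OF subspace_vecs[OF assms(1)] subspace_vecs[OF assms(2)]]]
    by blast
qed

lemma tensor_code_mono:
  "Ccol' \<subseteq> Ccol \<Longrightarrow> Crow' \<subseteq> Crow \<Longrightarrow> tensor_code R Ccol' Crow' \<subseteq> tensor_code R Ccol Crow"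
  unfolding tensor_code_def by (rule span_of_mono) blast

lemma diagonal_on_tensor:
  assumes "diagonal_on A x" "diagonal_on B y"
    "\<And>p i. p \<in> A \<Longrightarrow> x p i \<in> carrier R" "\<And>r j. r \<in> B \<Longrightarrow> y r j \<in> carrier R"
  shows "diagonal_on (A \<times> B) (\<lambda>(p, r) (i, j). x p i \<otimes> y r j)"
  unfolding diagonal_on_def
proof (rule ballI, rule conjI)
  fix pr assume "pr \<in> A \<times> B"
  then obtain p r where pr: "pr = (p, r)" "p \<in> A" "r \<in> B" by blast
  have "x p p \<noteq> \<zero>" "y r r \<noteq> \<zero>"
    using assms(1,2) pr unfolding diagonal_on_def by auto
  then show "(\<lambda>(p, r) (i, j). x p i \<otimes> y r j) pr pr \<noteq> \<zero>"
    using pr assms(3,4) by (simp add: integral_iff)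
  show "\<forall>pr'\<in>A \<times> B. pr' \<noteq> pr \<longrightarrow> (\<lambda>(p, r) (i, j). x p i \<otimes> y r j) pr pr' = \<zero>"
  proof (intro ballI impI)
    fix pr' assume "pr' \<in> A \<times> B" "pr' \<noteq> pr"
    then obtain p' r' where pr': "pr' = (p', r')" "p' \<in> A" "r' \<in> B" "(p', r') \<noteq> (p, r)"
      using pr(1) by blast
    show "(\<lambda>(p, r) (i, j). x p i \<otimes> y r j) pr pr' = \<zero>"
    proof (cases "p' = p")
      case True
      then have "y r r' = \<zero>" using assms(2) pr pr' unfolding diagonal_on_def by auto
      then show ?thesis using pr pr' assms(3) by simp
    next
      case False
      then have "x p p' = \<zero>" using assms(1) pr pr' unfolding diagonal_on_def by auto
      then show ?thesis using pr pr' assms(4) by simp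
    qed
  qed
qed

lemma card_unerased_ge_if_tensor_corrects:
  assumes "lin_code R {1..m} k1 Ccol" "lin_code R {1..n} k2 Crow"
    "corrects_on (grid m n) (tensor_code R Ccol Crow) E"
  shows "k1 * k2 \<le> card (grid m n - E)"
proof -
  have s1: "is_subspace R {1..m} Ccol" and s2: "is_subspace R {1..n} Crow"
    using assms(1,2) unfolding lin_code_def by auto
  have T: "is_subspace R (grid m n) (tensor_code R Ccol Crow)"
    by (rule tensor_code_subspace[OF s1 s2])
  obtain A x where A: "A \<subseteq> {1..m}" "k1 \<le> card A" "corrects_on {1..m} Ccol ({1..m} - A)"
      "x \<in> A \<rightarrow> Ccol" "diagonal_on A x"
    by (rule obtain_information_set[OF finite_atLeastAtMost assms(1)])
  obtain B y where B: "B \<subseteq> {1..n}" "k2 \<le> card B" "corrects_on {1..n} Crow ({1..n} - B)"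
      "y \<in> B \<rightarrow> Crow" "diagonal_on B y"
    by (rule obtain_information_set[OF finite_atLeastAtMost assms(2)])
  have "q ^ card (A \<times> B) \<le> card (tensor_code R Ccol Crow)"
  proof (rule card_ge_if_diagonal_family[OF finite_grid T])
    show "finite (A \<times> B)"
      using A(1) B(1) by (auto intro: finite_subset)
    show "(\<lambda>(p, r) (i, j). x p i \<otimes> y r j) \<in> A \<times> B \<rightarrow> tensor_code R Ccol Crow"
      using A(4) B(4) by (auto intro!: tensor_in_tensor_code[OF s1 s2])
    show "diagonal_on (A \<times> B) (\<lambda>(p, r) (i, j). x p i \<otimes> y r j)"
      by (rule diagonal_on_tensor[OF A(5) B(5) subspace_carrier[OF s1 funcset_mem[OF A(4)]]
            subspace_carrier[OF s2 funcset_mem[OF B(4)]]])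
  qed
  also have "\<dots> \<le> q ^ card (grid m n - E)"
    by (rule card_le_if_corrects_on[OF finite_grid subspace_vecs[OF T] assms(3)])
  finally have "card A * card B \<le> card (grid m n - E)"
    unfolding card_cartesian_product by (rule power_le_imp_le_exp[OF one_less_card_carrier])
  then show ?thesis
    using A(2) B(2) mult_le_mono[of k1 "card A" k2 "card B"] by linarith
qed

definition product_code :: "nat \<Rightarrow> nat \<Rightarrow> (nat \<Rightarrow> nat) set \<Rightarrow> (nat \<Rightarrow> nat) set \<Rightarrow> (nat \<times> nat \<Rightarrow> nat) set" where
  "product_code m n Ccol Crow =
     {x \<in> vecs R (grid m n). (\<forall>j. (\<lambda>i. x (i, j)) \<in> Ccol) \<and> (\<forall>i. (\<lambda>j. x (i, j)) \<in> Crow)}"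

lemma product_code_subspace:
  assumes "is_subspace R {1..m} Ccol" "is_subspace R {1..n} Crow"
  shows "is_subspace R (grid m n) (product_code m n Ccol Crow)"
  unfolding is_subspace_def
proof (intro conjI ballI)
  show "product_code m n Ccol Crow \<subseteq> vecs R (grid m n)"
    unfolding product_code_def by blast
  show "(\<lambda>_. \<zero>) \<in> product_code m n Ccol Crow"
    unfolding product_code_def
    using subspace_zero[OF subspace_vecs_self] subspace_zero[OF assms(1)] subspace_zero[OF assms(2)]
    by simp
next
  fix u v assume "u \<in> product_code m n Ccol Crow" "v \<in> product_code m n Ccol Crow"
  then show "(\<lambda>p. u p \<oplus> v p) \<in> product_code m n Ccol Crow"
    unfolding product_code_def
    by (auto intro: subspace_add[OF subspace_vecs_self] subspace_add[OF assms(1)] subspace_add[OF assms(2)])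
next
  fix c v assume "c \<in> carrier R" "v \<in> product_code m n Ccol Crow"
  then show "(\<lambda>p. c \<otimes> v p) \<in> product_code m n Ccol Crow"
    unfolding product_code_def
    by (auto intro: subspace_smult[OF subspace_vecs_self] subspace_smult[OF assms(1)] subspace_smult[OF assms(2)])
qed

lemma tensor_code_subset_product_code:
  assumes "is_subspace R {1..m} Ccol" "is_subspace R {1..n} Crow"
  shows "tensor_code R Ccol Crow \<subseteq> product_code m n Ccol Crow"
  unfolding tensor_code_def
proof (rule span_of_subset[OF product_code_subspace[OF assms]])
  show "{(\<lambda>(i, j). u i \<otimes> v j) | u v. u \<in> Ccol \<and> v \<in> Crow} \<subseteq> product_code m n Ccol Crow"
  proof
    fix w assume w: "w \<in> {(\<lambda>(i, j). u i \<otimes> v j) | u v. u \<in> Ccol \<and> v \<in> Crow}"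
    then obtain u v where uv: "w = (\<lambda>(i, j). u i \<otimes> v j)" "u \<in> Ccol" "v \<in> Crow" by blast
    have "w \<in> vecs R (grid m n)"
      using w tensor_generators_vecs[OF subspace_vecs[OF assms(1)] subspace_vecs[OF assms(2)]] by blast
    moreover have "(\<lambda>i. w (i, j)) \<in> Ccol" for j
    proof -
      have "(\<lambda>i. v j \<otimes> u i) \<in> Ccol"
        by (rule subspace_smult[OF assms(1) subspace_carrier[OF assms(2) uv(3)] uv(2)])
      then show ?thesis
        unfolding uv(1) using subspace_carrier[OF assms(1) uv(2)] subspace_carrier[OF assms(2) uv(3)]
        by (simp add: m_comm)
    qed
    moreover have "(\<lambda>j. w (i, j)) \<in> Crow" for i
      unfolding uv(1) by (simp add: subspace_smult[OF assms(2) subspace_carrier[OF assms(1) uv(2)] uv(3)])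
    ultimately show "w \<in> product_code m n Ccol Crow"
      unfolding product_code_def by blast
  qed
qed

text \<open>The rows indexed by A are recovered from their entries in B, then every column
  from its entries in A.\<close>
lemma product_code_corrects_on:
  assumes "A \<subseteq> {1..m}" "B \<subseteq> {1..n}"
    "corrects_on {1..m} Ccol ({1..m} - A)" "corrects_on {1..n} Crow ({1..n} - B)"
  shows "corrects_on (grid m n) (product_code m n Ccol Crow) (grid m n - A \<times> B)"
proof (rule corrects_onI)
  fix x y assume x: "x \<in> product_code m n Ccol Crow" and y: "y \<in> product_code m n Ccol Crow"
    and eq: "\<And>p. p \<in> grid m n - (grid m n - A \<times> B) \<Longrightarrow> x p = y p"
  have rows: "(\<lambda>j. x (i, j)) = (\<lambda>j. y (i, j))" if "i \<in> A" for i
  proof (rule corrects_onD[OF assms(4)])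
    show "(\<lambda>j. x (i, j)) \<in> Crow" "(\<lambda>j. y (i, j)) \<in> Crow"
      using x y unfolding product_code_def by auto
    fix j assume "j \<in> {1..n} - ({1..n} - B)"
    then show "x (i, j) = y (i, j)"
      using eq[of "(i, j)"] that assms(1,2) unfolding grid_def by auto
  qed
  have cols: "(\<lambda>i. x (i, j)) = (\<lambda>i. y (i, j))" for j
  proof (rule corrects_onD[OF assms(3)])
    show "(\<lambda>i. x (i, j)) \<in> Ccol" "(\<lambda>i. y (i, j)) \<in> Ccol"
      using x y unfolding product_code_def by auto
    fix i assume "i \<in> {1..m} - ({1..m} - A)"
    then show "x (i, j) = y (i, j)"
      using fun_cong[OF rows[of i], of j] by simp
  qed
  show "x = y"
  proof
    fix p show "x p = y p"
      using fun_cong[OF cols[of "snd p"], of "fst p"] by simp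
  qed
qed

lemma card_unerased_le_if_maximally_corrects_tensor:
  assumes "is_subspace R {1..m} Ccol" "is_subspace R {1..n} Crow" "A \<subseteq> {1..m}" "B \<subseteq> {1..n}"
    "corrects_on {1..m} Ccol ({1..m} - A)" "corrects_on {1..n} Crow ({1..n} - B)"
    "corrects_on (grid m n) (tensor_code R Ccol Crow) E"
    "\<And>p. p \<in> grid m n - E \<Longrightarrow> \<not> corrects_on (grid m n) (tensor_code R Ccol Crow) (insert p E)"
  shows "card (grid m n - E) \<le> card A * card B"
proof -
  let ?W = "product_code m n Ccol Crow"
  have W: "is_subspace R (grid m n) ?W"
    by (rule product_code_subspace[OF assms(1,2)])
  have AB: "grid m n - (grid m n - A \<times> B) = A \<times> B"
    using assms(3,4) unfolding grid_def by auto
  have "q ^ card (grid m n - E) \<le> card ?W"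
    by (rule card_ge_if_maximally_corrects[OF finite_grid W
          tensor_code_subset_product_code[OF assms(1,2)] assms(7,8)])
  also have "\<dots> \<le> q ^ card (grid m n - (grid m n - A \<times> B))"
    by (rule card_le_if_corrects_on[OF finite_grid subspace_vecs[OF W]
          product_code_corrects_on[OF assms(3-6)]])
  finally show ?thesis
    unfolding AB card_cartesian_product by (rule power_le_imp_le_exp[OF one_less_card_carrier])
qed

subsection \<open>Global parity checks\<close>

lemma global_checks_collide:
  assumes "finite G" "S \<subseteq> vecs R G" "q ^ h < card S" "\<forall>k<h. \<forall>p\<in>G. g k p \<in> carrier R"
  obtains x y where "x \<in> S" "y \<in> S" "x \<noteq> y"
    "\<And>k. k < h \<Longrightarrow> (\<Oplus>p\<in>G. g k p \<otimes> x p) = (\<Oplus>p\<in>G. g k p \<otimes> y p)"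
proof -
  define syndrome where "syndrome x = (\<lambda>k\<in>{..<h}. \<Oplus>p\<in>G. g k p \<otimes> x p)" for x
  have "syndrome ` S \<subseteq> {..<h} \<rightarrow>\<^sub>E carrier R"
  proof (rule image_subsetI)
    fix x assume "x \<in> S"
    then have "x \<in> vecs R G" using assms(2) by blast
    then have "x p \<in> carrier R" for p by (rule vecs_carrier)
    then show "syndrome x \<in> {..<h} \<rightarrow>\<^sub>E carrier R"
      unfolding syndrome_def using assms(4) by (auto intro!: finsum_closed)
  qed
  have "\<not> inj_on syndrome S"
  proof
    assume "inj_on syndrome S"
    then have "card S \<le> card ({..<h} \<rightarrow>\<^sub>E carrier R)"
      using \<open>syndrome ` S \<subseteq> _\<close> by (rule card_inj_on_le) (simp add: finite_PiE finite_carrier)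
    then show False using assms(3) by (simp add: card_PiE)
  qed
  then obtain x y where xy: "x \<in> S" "y \<in> S" "x \<noteq> y" and eq: "syndrome x = syndrome y"
    unfolding inj_on_def by blast
  have "(\<Oplus>p\<in>G. g k p \<otimes> x p) = (\<Oplus>p\<in>G. g k p \<otimes> y p)" if "k < h" for k
    using fun_cong[OF eq, of k] that unfolding syndrome_def by simp
  with xy show thesis by (rule that)
qed

text \<open>Pigeonhole: h checks take at most q^h values on S, and the difference of two vectors
  with equal check values is the kernel vector.\<close>
lemma kernel_vector_from_large_set:
  assumes "finite G" "is_subspace R G L" "S \<subseteq> L" "q ^ h < card S" "\<forall>k<h. \<forall>p\<in>G. g k p \<in> carrier R"
  obtains w where "w \<in> L" "w \<noteq> (\<lambda>_. \<zero>)" "\<And>k. k < h \<Longrightarrow> (\<Oplus>p\<in>G. g k p \<otimes> w p) = \<zero>"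
    "\<And>i. (\<And>x. x \<in> S \<Longrightarrow> x i = \<zero>) \<Longrightarrow> w i = \<zero>"
proof -
  obtain x y where xy: "x \<in> S" "y \<in> S" "x \<noteq> y"
      and same: "\<And>k. k < h \<Longrightarrow> (\<Oplus>p\<in>G. g k p \<otimes> x p) = (\<Oplus>p\<in>G. g k p \<otimes> y p)"
    by (rule global_checks_collide[OF assms(1) order_trans[OF assms(3) subspace_vecs[OF assms(2)]]
          assms(4,5)]) blast
  have xyL: "x \<in> L" "y \<in> L" using xy(1,2) assms(3) by auto
  have xc: "x p \<in> carrier R" and yc: "y p \<in> carrier R" for p
    using subspace_carrier[OF assms(2) xyL(1)] subspace_carrier[OF assms(2) xyL(2)] by auto
  define w where "w = (\<lambda>i. x i \<ominus> y i)"
  show thesis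
  proof (rule that)
    show "w \<in> L" unfolding w_def by (rule subspace_diff[OF assms(2) xyL])
    show "w \<noteq> (\<lambda>_. \<zero>)"
    proof
      assume "w = (\<lambda>_. \<zero>)"
      then have "w i = \<zero>" for i by simp
      then have "x i = y i" for i unfolding w_def using xc yc by simp
      then have "x = y" by (rule ext)
      with xy(3) show False ..
    qed
    fix k assume k: "k < h"
    have gc: "(\<lambda>p. g k p) \<in> G \<rightarrow> carrier R" using assms(5) k by auto
    have "(\<Oplus>p\<in>G. g k p \<otimes> w p) = (\<Oplus>p\<in>G. g k p \<otimes> x p) \<ominus> (\<Oplus>p\<in>G. g k p \<otimes> y p)"
      unfolding w_def by (rule finsum_mult_diff[OF assms(1) gc]) (auto simp: xc yc)
    also have "\<dots> = \<zero>"
    proof -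
      have "(\<Oplus>p\<in>G. g k p \<otimes> y p) \<in> carrier R"
        by (rule finsum_closed) (use gc yc in auto)
      then show ?thesis using same[OF k] by simp
    qed
    finally show "(\<Oplus>p\<in>G. g k p \<otimes> w p) = \<zero>" .
  next
    fix i assume S0: "\<And>x. x \<in> S \<Longrightarrow> x i = \<zero>"
    show "w i = \<zero>" unfolding w_def using S0[OF xy(1)] S0[OF xy(2)] by (simp add: minus_eq)
  qed
qed

text \<open>Trading h global checks for erasures: a maximal subset D of E corrected without them
  misses at most h positions of E, since h + 1 witnesses for the missing positions would span
  more than q^h vectors supported in E.\<close>
lemma corrects_on_large_subset_if_kernel_corrects:
  assumes "finite G" "is_subspace R G L" "E \<subseteq> G" "\<forall>k<h. \<forall>p\<in>G. g k p \<in> carrier R"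
    "corrects_on G {x \<in> L. \<forall>k<h. (\<Oplus>p\<in>G. g k p \<otimes> x p) = \<zero>} E"
  obtains D where "D \<subseteq> E" "card (E - D) \<le> h" "corrects_on G L D"
proof -
  obtain D where D: "D \<subseteq> E" "corrects_on G L D" "\<And>p. p \<in> E - D \<Longrightarrow> \<not> corrects_on G L (insert p D)"
    by (rule obtain_maximal_corrected_subset[OF finite_subset[OF assms(3,1)] subspace_vecs[OF assms(2)]])
      blast
  have "card (E - D) \<le> h"
  proof (rule ccontr)
    assume "\<not> card (E - D) \<le> h"
    then have "Suc h \<le> card (E - D)" by simp
    then obtain P where P: "P \<subseteq> E - D" "card P = Suc h" "finite P"
      by (rule obtain_subset_with_card_n)
    obtain z where z: "z \<in> P \<rightarrow> L" "diagonal_on P z" "\<And>p i. p \<in> P \<Longrightarrow> i \<notin> insert p D \<Longrightarrow> z p i = \<zero>"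
      by (rule obtain_diagonal_witnesses[where P = P, OF assms(2) order_refl D(2)]) (use P(1) D(3) in blast)+
    obtain S where S: "S \<subseteq> L" "card S = q ^ card P"
        "\<And>x i. x \<in> S \<Longrightarrow> (\<And>p. p \<in> P \<Longrightarrow> z p i = \<zero>) \<Longrightarrow> x i = \<zero>"
      by (rule diagonal_family_span[OF P(3) assms(2) z(1,2)]) blast
    have "q ^ h < card S"
      using S(2) P(2) one_less_card_carrier by simp
    then obtain w where w: "w \<in> L" "w \<noteq> (\<lambda>_. \<zero>)" "\<And>k. k < h \<Longrightarrow> (\<Oplus>p\<in>G. g k p \<otimes> w p) = \<zero>"
        "\<And>i. (\<And>x. x \<in> S \<Longrightarrow> x i = \<zero>) \<Longrightarrow> w i = \<zero>"
      by (rule kernel_vector_from_large_set[OF assms(1,2) S(1) _ assms(4)]) blast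
    have "(\<lambda>_. \<zero>) \<in> {x \<in> L. \<forall>k<h. (\<Oplus>p\<in>G. g k p \<otimes> x p) = \<zero>}"
      using subspace_zero[OF assms(2)] assms(4) by (auto intro!: finsum_mult_zero)
    moreover have "w i = \<zero>" if "i \<in> G - E" for i
    proof (rule w(4))
      fix x assume "x \<in> S"
      moreover have "z p i = \<zero>" if "p \<in> P" for p
      proof (rule z(3)[OF that])
        show "i \<notin> insert p D" using \<open>i \<in> G - E\<close> P(1) D(1) that by blast
      qed
      ultimately show "x i = \<zero>" by (rule S(3))
    qed
    ultimately have "w = (\<lambda>_. \<zero>)"
      using w(1,3) by (intro corrects_onD[OF assms(5)]) auto
    with w(2) show False ..
  qed
  with D(1) D(2) show thesis by (intro that)
qed

lemma coordinate_checks_kernel: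
  assumes "finite G" "is_subspace R G L" "set e \<subseteq> G"
  shows "{x \<in> L. \<forall>k<length e. (\<Oplus>p\<in>G. (if p = e ! k then \<one> else \<zero>) \<otimes> x p) = \<zero>}
    = {x \<in> L. \<forall>i\<in>set e. x i = \<zero>}"
proof -
  have "(\<Oplus>p\<in>G. (if p = e ! k then \<one> else \<zero>) \<otimes> x p) = x (e ! k)" if "x \<in> L" "k < length e" for x k
  proof -
    have xc: "x p \<in> carrier R" for p by (rule subspace_carrier[OF assms(2) that(1)])
    have "e ! k \<in> G" using nth_mem[OF that(2)] assms(3) by blast
    then have "(\<Oplus>p\<in>G. (if p = e ! k then \<one> else \<zero>) \<otimes> x p)
        = (if e ! k = e ! k then \<one> else \<zero>) \<otimes> x (e ! k)"
      by (rule finsum_eq_single[OF assms(1)]) (auto simp: xc)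
    then show ?thesis by (simp add: xc)
  qed
  then show ?thesis by (auto simp: all_set_conv_all_nth)
qed

end

subsection \<open>Correctable patterns of the topology\<close>

lemma finite_fieldI: "field R \<Longrightarrow> finite (carrier R) \<Longrightarrow> finite_field R"
  by (simp add: finite_field_def finite_field_axioms_def)

lemma correctable_subset_grid: "correctable m n a b h E \<Longrightarrow> E \<subseteq> grid m n"
  unfolding correctable_def by blast

lemma topo_code_0_iff:
  "topo_code R m n a b 0 C \<longleftrightarrow>
    (\<exists>Ccol Crow. lin_code R {1..m} (m - a) Ccol \<and> lin_code R {1..n} (n - b) Crow \<and>
      C = tensor_code R Ccol Crow)"
  unfolding topo_code_def by auto

lemma correctable_0_iff:
  "correctable m n a b 0 E \<longleftrightarrow> E \<subseteq> grid m n \<and>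
    (\<exists>(R :: nat ring) Ccol Crow. finite_field R \<and> lin_code R {1..m} (m - a) Ccol \<and>
      lin_code R {1..n} (n - b) Crow \<and> corrects_on (grid m n) (tensor_code R Ccol Crow) E)"
  unfolding correctable_def topo_code_0_iff corrects_iff_corrects_on
  by (auto simp: finite_field_def finite_field_axioms_def)

lemma card_unerased_ge_if_correctable_0:
  assumes "correctable m n a b 0 E"
  shows "(m - a) * (n - b) \<le> card (grid m n - E)"
proof -
  obtain R :: "nat ring" and Ccol Crow where "finite_field R" "lin_code R {1..m} (m - a) Ccol"
      "lin_code R {1..n} (n - b) Crow" "corrects_on (grid m n) (tensor_code R Ccol Crow) E"
    using assms unfolding correctable_0_iff by blast
  then show ?thesis by (rule finite_field.card_unerased_ge_if_tensor_corrects)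
qed

lemma card_unerased_le_if_max_correctable_0:
  assumes "max_correctable m n a b 0 E"
  shows "card (grid m n - E) \<le> (m - a) * (n - b)"
proof -
  have cE: "correctable m n a b 0 E" and not_larger: "\<And>E'. E \<subset> E' \<Longrightarrow> \<not> correctable m n a b 0 E'"
    using assms unfolding max_correctable_def by auto
  obtain R :: "nat ring" and Ccol Crow where R: "finite_field R" and codes: "lin_code R {1..m} (m - a) Ccol"
      "lin_code R {1..n} (n - b) Crow" and EG: "E \<subseteq> grid m n"
      and corr: "corrects_on (grid m n) (tensor_code R Ccol Crow) E"
    using cE unfolding correctable_0_iff by blast
  interpret finite_field R by (rule R)
  obtain Ccol' A where col: "Ccol' \<subseteq> Ccol" "lin_code R {1..m} (m - a) Ccol'" "A \<subseteq> {1..m}"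
      "card A = m - a" "corrects_on {1..m} Ccol' ({1..m} - A)"
    by (rule obtain_subcode_with_information_set[OF finite_atLeastAtMost codes(1)])
  obtain Crow' B where row: "Crow' \<subseteq> Crow" "lin_code R {1..n} (n - b) Crow'" "B \<subseteq> {1..n}"
      "card B = n - b" "corrects_on {1..n} Crow' ({1..n} - B)"
    by (rule obtain_subcode_with_information_set[OF finite_atLeastAtMost codes(2)])
  have "corrects_on (grid m n) (tensor_code R Ccol' Crow') E"
    by (rule corrects_on_subset[OF tensor_code_mono[OF col(1) row(1)] corr])
  moreover have "\<not> corrects_on (grid m n) (tensor_code R Ccol' Crow') (insert p E)"
    if "p \<in> grid m n - E" for p
  proof
    assume "corrects_on (grid m n) (tensor_code R Ccol' Crow') (insert p E)"
    then have "correctable m n a b 0 (insert p E)"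
      unfolding correctable_0_iff using R col(2) row(2) EG that by blast
    moreover have "E \<subset> insert p E" using that by auto
    ultimately show False using not_larger by blast
  qed
  ultimately have "card (grid m n - E) \<le> card A * card B"
    using col(2) row(2) unfolding lin_code_def
    by (intro card_unerased_le_if_maximally_corrects_tensor[OF _ _ col(3) row(3) col(5) row(5)]) auto
  then show ?thesis using col(4) row(4) by simp
qed

lemma correctable_imp_correctable_0_subset:
  assumes "correctable m n a b h E"
  obtains D where "D \<subseteq> E" "card (E - D) \<le> h" "correctable m n a b 0 D"
proof -
  obtain R :: "nat ring" and Ccol Crow g where R: "field R" "finite (carrier R)"
      and codes: "lin_code R {1..m} (m - a) Ccol" "lin_code R {1..n} (n - b) Crow"
      and g: "\<forall>k<h. \<forall>p\<in>grid m n. g k p \<in> carrier R"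
      and corr: "corrects_on (grid m n)
        {x \<in> tensor_code R Ccol Crow. \<forall>k<h. (\<Oplus>\<^bsub>R\<^esub>p\<in>grid m n. g k p \<otimes>\<^bsub>R\<^esub> x p) = \<zero>\<^bsub>R\<^esub>} E"
    using assms unfolding correctable_def topo_code_def corrects_iff_corrects_on by blast
  have FF: "finite_field R" by (rule finite_fieldI[OF R])
  interpret finite_field R by (rule FF)
  have T: "is_subspace R (grid m n) (tensor_code R Ccol Crow)"
    using codes unfolding lin_code_def by (intro tensor_code_subspace) auto
  obtain D where "D \<subseteq> E" "card (E - D) \<le> h" "corrects_on (grid m n) (tensor_code R Ccol Crow) D"
    by (rule corrects_on_large_subset_if_kernel_corrects[OF finite_grid T
          correctable_subset_grid[OF assms] g corr])
  moreover have "D \<subseteq> grid m n" using \<open>D \<subseteq> E\<close> correctable_subset_grid[OF assms] by blast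
  ultimately have "correctable m n a b 0 D"
    unfolding correctable_0_iff using FF codes by blast
  with \<open>D \<subseteq> E\<close> \<open>card (E - D) \<le> h\<close> show thesis by (rule that)
qed

lemma correctable_0_add_erasures:
  assumes "correctable m n a b 0 E" "I \<subseteq> grid m n - E" "card I = h"
  shows "correctable m n a b h (E \<union> I)"
proof -
  obtain R :: "nat ring" and Ccol Crow where R: "finite_field R" and codes: "lin_code R {1..m} (m - a) Ccol"
      "lin_code R {1..n} (n - b) Crow" and EG: "E \<subseteq> grid m n"
      and corr: "corrects_on (grid m n) (tensor_code R Ccol Crow) E"
    using assms(1) unfolding correctable_0_iff by blast
  interpret finite_field R by (rule R)
  have T: "is_subspace R (grid m n) (tensor_code R Ccol Crow)"
    using codes unfolding lin_code_def by (intro tensor_code_subspace) auto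
  have "finite I" by (rule finite_subset[OF assms(2) finite_Diff[OF finite_grid]])
  then obtain e where e: "set e = I" "distinct e" using finite_distinct_list by blast
  have len: "length e = h" using distinct_card[OF e(2)] e(1) assms(3) by simp
  let ?g = "\<lambda>k p. if p = e ! k then \<one>\<^bsub>R\<^esub> else \<zero>\<^bsub>R\<^esub>"
  let ?C = "{x \<in> tensor_code R Ccol Crow. \<forall>k<h. (\<Oplus>\<^bsub>R\<^esub>p\<in>grid m n. ?g k p \<otimes>\<^bsub>R\<^esub> x p) = \<zero>\<^bsub>R\<^esub>}"
  have "?C = {x \<in> tensor_code R Ccol Crow. \<forall>i\<in>I. x i = \<zero>\<^bsub>R\<^esub>}"
    unfolding len[symmetric] e(1)[symmetric]
    by (rule coordinate_checks_kernel[OF finite_grid T]) (use e(1) assms(2) in blast)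
  then have "corrects_on (grid m n) ?C (E \<union> I)"
    using corrects_on_vanishing_union[OF corr] by simp
  moreover have "topo_code R m n a b h ?C"
    unfolding topo_code_def using codes by (intro exI[of _ Ccol] exI[of _ Crow] exI[of _ ?g]) auto
  moreover have "field R" "finite (carrier R)"
    using R unfolding finite_field_def finite_field_axioms_def by auto
  ultimately show ?thesis
    unfolding correctable_def corrects_iff_corrects_on using EG assms(2) by blast
qed

lemma correctable_imp_max_correctable_superset:
  assumes "correctable m n a b h E"
  obtains E' where "E \<subseteq> E'" "max_correctable m n a b h E'"
proof -
  obtain E' where E': "E \<subseteq> E'" "E' \<subseteq> grid m n" "correctable m n a b h E'"
      and maximal: "\<And>E''. E' \<subset> E'' \<Longrightarrow> E'' \<subseteq> grid m n \<Longrightarrow> \<not> correctable m n a b h E''"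
    by (rule finite_maximal_superset[where Q = "correctable m n a b h", OF finite_grid
          correctable_subset_grid[OF assms] assms]) blast
  have "\<not> correctable m n a b h E''" if "E' \<subset> E''" for E''
  proof
    assume c: "correctable m n a b h E''"
    from maximal[OF that correctable_subset_grid[OF c]] c show False by contradiction
  qed
  then have "max_correctable m n a b h E'"
    unfolding max_correctable_def using E'(3) by blast
  with E'(1) show thesis by (rule that)
qed

lemma max_correctable_decompose:
  assumes "h \<le> (m - a) * (n - b)" "max_correctable m n a b h E"
  obtains E' I where "E = E' \<union> I" "max_correctable m n a b 0 E'" "I \<subseteq> grid m n - E'" "card I = h"
proof -
  have cE: "correctable m n a b h E"
    using assms(2) unfolding max_correctable_def by blast
  have EG: "E \<subseteq> grid m n" by (rule correctable_subset_grid[OF cE])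
  obtain D where D: "D \<subseteq> E" "card (E - D) \<le> h" "correctable m n a b 0 D"
    by (rule correctable_imp_correctable_0_subset[OF cE])
  obtain E' where E': "D \<subseteq> E'" "max_correctable m n a b 0 E'"
    by (rule correctable_imp_max_correctable_superset[OF D(3)])
  have cE': "correctable m n a b 0 E'"
    using E'(2) unfolding max_correctable_def by blast
  have "card (E - E') \<le> card (E - D)"
    using E'(1) by (intro card_mono[OF finite_Diff[OF finite_subset[OF EG finite_grid]]]) blast
  then have lower: "card (E - E') \<le> h" using D(2) by linarith
  have upper: "h \<le> card (grid m n - E')"
    using assms(1) card_unerased_ge_if_correctable_0[OF cE'] by linarith
  have "E - E' \<subseteq> grid m n - E'" using EG by blast
  then obtain I where I: "E - E' \<subseteq> I" "I \<subseteq> grid m n - E'" "card I = h"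
    using exists_subset_between[OF lower upper _ finite_Diff[OF finite_grid]] by blast
  have "correctable m n a b h (E' \<union> I)"
    by (rule correctable_0_add_erasures[OF cE' I(2,3)])
  moreover have "E \<subseteq> E' \<union> I" using I(1) by blast
  ultimately have "E = E' \<union> I"
    using assms(2) unfolding max_correctable_def psubset_eq by blast
  then show thesis using E'(2) I(2,3) by (rule that)
qed

lemma card_le_if_correctable:
  assumes "correctable m n a b h E"
  shows "card E + (m - a) * (n - b) \<le> card (grid m n) + h"
proof -
  obtain D where D: "D \<subseteq> E" "card (E - D) \<le> h" "correctable m n a b 0 D"
    by (rule correctable_imp_correctable_0_subset[OF assms])
  have EG: "E \<subseteq> grid m n" by (rule correctable_subset_grid[OF assms])
  have finE: "finite E" by (rule finite_subset[OF EG finite_grid])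
  have finD: "finite D" by (rule finite_subset[OF D(1) finE])
  have "(m - a) * (n - b) \<le> card (grid m n - D)"
    by (rule card_unerased_ge_if_correctable_0[OF D(3)])
  moreover have "card (grid m n - D) = card (grid m n) - card D"
    using D(1) EG by (intro card_Diff_subset[OF finD]) blast
  moreover have "card (E - D) = card E - card D"
    by (rule card_Diff_subset[OF finD D(1)])
  moreover have "card D \<le> card E" by (rule card_mono[OF finE D(1)])
  moreover have "card E \<le> card (grid m n)" by (rule card_mono[OF finite_grid EG])
  ultimately show ?thesis using D(2) by linarith
qed

lemma max_correctable_add_erasures:
  assumes "max_correctable m n a b 0 E'" "I \<subseteq> grid m n - E'" "card I = h"
  shows "max_correctable m n a b h (E' \<union> I)"
proof -
  have cE': "correctable m n a b 0 E'"
    using assms(1) unfolding max_correctable_def by blast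
  have E'G: "E' \<subseteq> grid m n" by (rule correctable_subset_grid[OF cE'])
  have finE': "finite E'" by (rule finite_subset[OF E'G finite_grid])
  have finI: "finite I" by (rule finite_subset[OF assms(2) finite_Diff[OF finite_grid]])
  have card_union: "card (E' \<union> I) = card E' + h"
    using card_Un_disjoint[OF finE' finI] assms(2,3) by blast
  have unerased: "card (grid m n) - card E' \<le> (m - a) * (n - b)"
    using card_unerased_le_if_max_correctable_0[OF assms(1)] card_Diff_subset[OF finE' E'G] by simp
  have "card E' \<le> card (grid m n)" by (rule card_mono[OF finite_grid E'G])
  have "\<not> correctable m n a b h E''" if "E' \<union> I \<subset> E''" for E''
  proof
    assume cE'': "correctable m n a b h E''"
    have "finite E''" by (rule finite_subset[OF correctable_subset_grid[OF cE''] finite_grid])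
    then have "card (E' \<union> I) < card E''" by (rule psubset_card_mono[OF _ that])
    with card_le_if_correctable[OF cE''] card_union unerased \<open>card E' \<le> card (grid m n)\<close>
    show False by linarith
  qed
  moreover have "correctable m n a b h (E' \<union> I)"
    by (rule correctable_0_add_erasures[OF cE' assms(2,3)])
  ultimately show ?thesis unfolding max_correctable_def by blast
qed

theorem theorem2:
  fixes m n a b h :: nat
  assumes "a < m" and "b < n"
    and "h \<le> (m - a) * (n - b) - max (m - a) (n - b)"
  shows "{E. max_correctable m n a b h E} =
         {E' \<union> I | E' I. max_correctable m n a b 0 E' \<and> I \<subseteq> grid m n - E' \<and> card I = h}"
proof -
  have h: "h \<le> (m - a) * (n - b)" using assms(3) by linarith
  show ?thesis
  proof (intro equalityI subsetI)
    fix E assume "E \<in> {E. max_correctable m n a b h E}"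
    then have "max_correctable m n a b h E" by simp
    then obtain E' I where "E = E' \<union> I" "max_correctable m n a b 0 E'" "I \<subseteq> grid m n - E'" "card I = h"
      by (rule max_correctable_decompose[OF h])
    then show "E \<in> {E' \<union> I | E' I. max_correctable m n a b 0 E' \<and> I \<subseteq> grid m n - E' \<and> card I = h}"
      by blast
  next
    fix E assume "E \<in> {E' \<union> I | E' I. max_correctable m n a b 0 E' \<and> I \<subseteq> grid m n - E' \<and> card I = h}"
    then show "E \<in> {E. max_correctable m n a b h E}"
      using max_correctable_add_erasures by blast
  qed
qed

end
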